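(* Let $s\ge2$, let $(g_{\mu\nu})$ be a real symmetric invertible $(s+1)\times(s+1)$ matrix with inverse $(g^{\mu\nu})$, and let $\mathcal{A}=\bigoplus_n\mathcal{A}_n$ be the graded unital associative $\mathbb{C}$-algebra generated by $\nabla_0,\dots,\nabla_s$ in degree $1$ with relations $\sum_{\lambda,\mu}g^{\lambda\mu}[\nabla_\lambda,[\nabla_\mu,\nabla_\nu]]=0$ for $\nu=0,\dots,s$. Then $\mathcal{A}$ has exponential growth, i.e. $\dim\mathcal{A}_n$ grows exponentially in $n$. *)

theory Defs
  imports Complex_Main "HOL-Library.Function_Algebras"
begin

text \<open>Noncommutative polynomials in the letters 0..s are functions from words
(nat lists) to complex coefficients. Multiplication is concatenation product.\<close>

type_synonym ncpoly = "nat list \<Rightarrow> complex"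

definition ncmul :: "ncpoly \<Rightarrow> ncpoly \<Rightarrow> ncpoly" where
  "ncmul p q = (\<lambda>w. \<Sum>i\<le>length w. p (take i w) * q (drop i w))"

definition ncmono :: "nat list \<Rightarrow> ncpoly" where
  "ncmono u = (\<lambda>w. if w = u then 1 else 0)"

definition nccomm :: "ncpoly \<Rightarrow> ncpoly \<Rightarrow> ncpoly" where
  "nccomm a b = ncmul a b - ncmul b a"

definition cscale :: "complex \<Rightarrow> ncpoly \<Rightarrow> ncpoly" where
  "cscale c f = (\<lambda>w. c * f w)"

definition free_alg :: "nat \<Rightarrow> ncpoly set" where
  "free_alg s = {f. finite {w. f w \<noteq> 0} \<and> (\<forall>w. f w \<noteq> 0 \<longrightarrow> set w \<subseteq> {0..s})}"

definition free_deg :: "nat \<Rightarrow> nat \<Rightarrow> ncpoly set" where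
  "free_deg s n = {f. \<forall>w. f w \<noteq> 0 \<longrightarrow> length w = n \<and> set w \<subseteq> {0..s}}"

definition ym_rel :: "nat \<Rightarrow> (nat \<Rightarrow> nat \<Rightarrow> real) \<Rightarrow> nat \<Rightarrow> ncpoly" where
  "ym_rel s ginv \<nu> = (\<Sum>la\<le>s. \<Sum>\<mu>\<le>s. cscale (complex_of_real (ginv la \<mu>))
      (nccomm (ncmono [la]) (nccomm (ncmono [\<mu>]) (ncmono [\<nu>]))))"

definition ym_ideal :: "nat \<Rightarrow> (nat \<Rightarrow> nat \<Rightarrow> real) \<Rightarrow> ncpoly set" where
  "ym_ideal s ginv = module.span cscale
     {ncmul (ncmul p (ym_rel s ginv \<nu>)) q | p q \<nu>. p \<in> free_alg s \<and> q \<in> free_alg s \<and> \<nu> \<le> s}"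

text \<open>dim A_n = dim (free degree n part) - dim (ideal intersected with it),
i.e. the dimension of the quotient (free_deg n)/(I \<inter> free_deg n).\<close>
definition ym_dim :: "nat \<Rightarrow> (nat \<Rightarrow> nat \<Rightarrow> real) \<Rightarrow> nat \<Rightarrow> nat" where
  "ym_dim s ginv n = vector_space.dim cscale (free_deg s n)
      - vector_space.dim cscale (ym_ideal s ginv \<inter> free_deg s n)"

end

theory Submission
  imports Defs
begin

(* Over the complex numbers, once s + 1 \<ge> 3, there are linearly independent vectors a, b with
   G(a, b) = G(b, b) = 0 for the form G = (g^{\<mu>\<nu>}). The substitution
   \<nabla>_i \<mapsto> a_i X + b_i Y into the free algebra on two letters X, Y maps each relation to a
   combination of cubic words containing X at least twice, so the image of the relation ideal
   vanishes on all words in which any two occurrences of X are at distance at least 3; this set of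
   words is closed under taking factors, hence the vanishing propagates through two-sided
   multiples. Evaluation of the image at such a word of length n is therefore a linear functional on
   the degree-n part that kills the ideal, and these functionals are dual to explicit elements
   built from a basis dual to a, b. So dim A_n is at least the number of such words, which is at
   least 2^(n div 3), as every concatenation of blocks XYY and YYY qualifies. *)

interpretation ncpoly: vector_space cscale
  by unfold_locales (auto simp: cscale_def fun_eq_iff algebra_simps)

lemma cscale_apply [simp]: "cscale c f w = c * f w"
  by (simp add: cscale_def)

lemma sum_fun_apply: "(\<Sum>i\<in>I. f i) x = (\<Sum>i\<in>I. f i x)"
  by (induction I rule: infinite_finite_induct) auto

definition words :: "'a set \<Rightarrow> nat \<Rightarrow> 'a list set" where
  "words A n = {w. set w \<subseteq> A \<and> length w = n}"

lemma finite_words [simp]: "finite A \<Longrightarrow> finite (words A n)"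
  unfolding words_def by (rule finite_lists_length_eq)

lemma sum_words_append:
  assumes "i \<le> n"
  shows "(\<Sum>w\<in>words A n. h w) = (\<Sum>(x, y)\<in>words A i \<times> words A (n - i). h (x @ y))"
  by (rule sum.reindex_bij_witness[where i="\<lambda>(x, y). x @ y" and j="\<lambda>w. (take i w, drop i w)"])
     (use assms in \<open>auto simp: words_def dest: in_set_takeD in_set_dropD\<close>)

lemma sum_words_prod_list:
  fixes H :: "'a \<Rightarrow> 'b \<Rightarrow> 'c :: comm_semiring_1"
  shows "(\<Sum>w\<in>words A (length u). prod_list (map2 H w u)) = prod_list (map (\<lambda>c. \<Sum>i\<in>A. H i c) u)"
proof (induction u)
  case Nil
  have "words A 0 = {[]}" by (auto simp: words_def)
  then show ?case by simp
next
  case (Cons c u)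
  have "(\<Sum>w\<in>words A (length (c # u)). prod_list (map2 H w (c # u)))
      = (\<Sum>(i, w)\<in>A \<times> words A (length u). H i c * prod_list (map2 H w u))"
    by (rule sum.reindex_bij_witness[where i="\<lambda>(i, w). i # w" and j="\<lambda>w. (hd w, tl w)"])
       (auto simp: words_def length_Suc_conv)
  also have "\<dots> = (\<Sum>i\<in>A. H i c) * (\<Sum>w\<in>words A (length u). prod_list (map2 H w u))"
    by (simp only: sum_product sum.cartesian_product)
  finally show ?case using Cons.IH by simp
qed

lemma prod_list_map2_append:
  assumes "length x = i" "i \<le> length u"
  shows "prod_list (map2 M (x @ y) u) = prod_list (map2 M x (take i u)) * prod_list (map2 M y (drop i u))"
proof -
  have "zip (x @ y) (take i u @ drop i u) = zip x (take i u) @ zip y (drop i u)"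
    using assms by (intro zip_append) simp
  then show ?thesis by simp
qed

lemma prod_list_map2_mult:
  "length w = length u \<Longrightarrow> length u = length u' \<Longrightarrow>
   prod_list (map2 F w u) * prod_list (map2 G w u') =
   prod_list (map2 (\<lambda>i (c, c'). F i c * G i c') w (zip u u'))"
  for F G :: "'a \<Rightarrow> 'b \<Rightarrow> 'c :: comm_monoid_mult"
  by (induction w u u' rule: list_induct3) (simp_all add: mult_ac)

lemma prod_list_map2_delta:
  "length u = length u' \<Longrightarrow>
   prod_list (map2 (\<lambda>c c'. if c = c' then 1 else 0) u u') = (if u = u' then 1 else (0 :: 'a :: semiring_1))"
  by (induction u u' rule: list_induct2) auto

section \<open>Substitution homomorphisms of the free algebra\<close>

text \<open>\<open>ncsubst A M\<close> is the algebra homomorphism substituting \<open>\<Sum>\<^sub>c M i c \<cdot> c\<close> for each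
  letter \<open>i \<in> A\<close> and \<open>0\<close> for the letters outside \<open>A\<close>.\<close>
definition ncsubst :: "nat set \<Rightarrow> (nat \<Rightarrow> nat \<Rightarrow> complex) \<Rightarrow> ncpoly \<Rightarrow> ncpoly" where
  "ncsubst A M f = (\<lambda>u. \<Sum>w\<in>words A (length u). f w * prod_list (map2 M w u))"

lemma ncsubst_zero [simp]: "ncsubst A M 0 = 0"
  by (simp add: ncsubst_def fun_eq_iff)

lemma ncsubst_add: "ncsubst A M (f + g) = ncsubst A M f + ncsubst A M g"
  by (auto simp: ncsubst_def fun_eq_iff sum.distrib algebra_simps)

lemma ncsubst_diff: "ncsubst A M (f - g) = ncsubst A M f - ncsubst A M g"
  by (auto simp: ncsubst_def fun_eq_iff sum_subtractf algebra_simps)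

lemma ncsubst_cscale: "ncsubst A M (cscale c f) = cscale c (ncsubst A M f)"
  by (auto simp: ncsubst_def cscale_def fun_eq_iff sum_distrib_left algebra_simps)

lemma ncsubst_sum: "ncsubst A M (\<Sum>i\<in>I. f i) = (\<Sum>i\<in>I. ncsubst A M (f i))"
  by (auto simp: ncsubst_def fun_eq_iff sum_fun_apply sum_distrib_right intro: sum.swap)

lemma ncsubst_ncmul: "ncsubst A M (ncmul p q) = ncmul (ncsubst A M p) (ncsubst A M q)"
proof (rule ext)
  fix u :: "nat list"
  define n where "n = length u"
  have "ncsubst A M (ncmul p q) u
      = (\<Sum>i\<le>n. \<Sum>w\<in>words A n. p (take i w) * q (drop i w) * prod_list (map2 M w u))"
    unfolding ncsubst_def ncmul_def n_def
    by (subst sum.swap, rule sum.cong) (auto simp: words_def sum_distrib_right)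
  also have "\<dots> = (\<Sum>i\<le>n. ncsubst A M p (take i u) * ncsubst A M q (drop i u))"
  proof (rule sum.cong[OF refl])
    fix i assume "i \<in> {..n}"
    then have i: "i \<le> n" "i \<le> length u" by (simp_all add: n_def)
    have "(\<Sum>w\<in>words A n. p (take i w) * q (drop i w) * prod_list (map2 M w u))
        = (\<Sum>(x, y)\<in>words A i \<times> words A (n - i).
             (p x * prod_list (map2 M x (take i u))) * (q y * prod_list (map2 M y (drop i u))))"
      by (subst sum_words_append[OF i(1)], rule sum.cong)
         (auto simp: words_def prod_list_map2_append[OF _ i(2)])
    also have "\<dots> = ncsubst A M p (take i u) * ncsubst A M q (drop i u)"
      using i by (simp add: ncsubst_def sum_product sum.cartesian_product n_def min_def)
    finally show "(\<Sum>w\<in>words A n. p (take i w) * q (drop i w) * prod_list (map2 M w u))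
        = ncsubst A M p (take i u) * ncsubst A M q (drop i u)" .
  qed
  also have "\<dots> = ncmul (ncsubst A M p) (ncsubst A M q) u"
    by (simp add: ncmul_def n_def)
  finally show "ncsubst A M (ncmul p q) u = ncmul (ncsubst A M p) (ncsubst A M q) u" .
qed

lemma ncsubst_nccomm: "ncsubst A M (nccomm f g) = nccomm (ncsubst A M f) (ncsubst A M g)"
  by (simp add: nccomm_def ncsubst_diff ncsubst_ncmul)

lemma ncsubst_ncmono:
  assumes "finite A"
  shows "ncsubst A M (ncmono v) u = (if v \<in> words A (length u) then prod_list (map2 M v u) else 0)"
proof -
  have "ncsubst A M (ncmono v) u = (\<Sum>w\<in>words A (length u). if w = v then prod_list (map2 M w u) else 0)"
    unfolding ncsubst_def ncmono_def by (rule sum.cong) auto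
  then show ?thesis using assms by (simp add: sum.delta')
qed

definition nclinear :: "(nat \<Rightarrow> complex) \<Rightarrow> ncpoly" where
  "nclinear h = (\<lambda>u. if length u = 1 then h (hd u) else 0)"

lemma ncsubst_letter:
  assumes "finite A" "i \<in> A"
  shows "ncsubst A M (ncmono [i]) = nclinear (M i)"
proof
  fix u
  show "ncsubst A M (ncmono [i]) u = nclinear (M i) u"
    using assms by (cases u) (auto simp: ncsubst_ncmono nclinear_def words_def)
qed

lemma nclinear_simps [simp]:
  "nclinear h [] = 0" "nclinear h [c] = h c" "nclinear h (c # d # w) = 0"
  by (simp_all add: nclinear_def)

lemma ncmul_nclinear_left: "ncmul (nclinear h) X u = (if u = [] then 0 else h (hd u) * X (tl u))"
proof (cases u)
  case Nil
  then show ?thesis by (simp add: ncmul_def nclinear_def)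
next
  case (Cons c w)
  have "ncmul (nclinear h) X u = (\<Sum>i\<le>length u. if i = 1 then h c * X w else 0)"
    unfolding ncmul_def
    by (rule sum.cong[OF refl]) (auto simp: Cons nclinear_def take_Cons' drop_Cons')
  then show ?thesis using Cons by (auto simp: Suc_le_eq)
qed

lemma ncmul_nclinear_right: "ncmul X (nclinear h) u = (if u = [] then 0 else X (butlast u) * h (last u))"
proof (cases u rule: rev_cases)
  case Nil
  then show ?thesis by (simp add: ncmul_def nclinear_def)
next
  case (snoc w c)
  have "ncmul X (nclinear h) u = (\<Sum>i\<le>length u. if i = length w then X w * h c else 0)"
    unfolding ncmul_def
  proof (rule sum.cong[OF refl])
    fix i assume "i \<in> {..length u}"
    then consider "i < length w" | "i = length w" | "i = Suc (length w)"
      using snoc by fastforce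
    then show "X (take i u) * nclinear h (drop i u) = (if i = length w then X w * h c else 0)"
      by cases (auto simp: nclinear_def snoc)
  qed
  then show ?thesis using snoc by simp
qed

lemma nested_nccomm_nclinear:
  "nccomm (nclinear a) (nccomm (nclinear b) (nclinear c)) u =
    (if length u = 3 then a (u!0) * (b (u!1) * c (u!2) - c (u!1) * b (u!2))
        - (b (u!0) * c (u!1) - c (u!0) * b (u!1)) * a (u!2) else 0)"
proof -
  consider "u = []" | x where "u = [x]" | x y where "u = [x, y]" | x y z where "u = [x, y, z]"
    | x y z w r where "u = x # y # z # w # r"
    by (metis list.exhaust)
  then show ?thesis
    by cases (simp_all add: nccomm_def ncmul_nclinear_left ncmul_nclinear_right)
qed

section \<open>Vanishing on factor-closed sets of words\<close>

definition factor_closed :: "'a list set \<Rightarrow> bool" where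
  "factor_closed W \<longleftrightarrow> (\<forall>u\<in>W. \<forall>k. take k u \<in> W \<and> drop k u \<in> W)"

definition vanishing :: "nat list set \<Rightarrow> ncpoly set" where
  "vanishing W = {f. \<forall>u\<in>W. f u = 0}"

lemma ncmul_vanishing_left:
  "factor_closed W \<Longrightarrow> q \<in> vanishing W \<Longrightarrow> ncmul p q \<in> vanishing W"
  by (simp add: factor_closed_def vanishing_def ncmul_def)

lemma ncmul_vanishing_right:
  "factor_closed W \<Longrightarrow> p \<in> vanishing W \<Longrightarrow> ncmul p q \<in> vanishing W"
  by (simp add: factor_closed_def vanishing_def ncmul_def)

lemma subspace_ncsubst_vimage_vanishing: "ncpoly.subspace {f. ncsubst A M f \<in> vanishing W}"
  by (rule ncpoly.subspaceI)
     (auto simp: vanishing_def ncsubst_add ncsubst_cscale)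

lemma ncsubst_ym_ideal_vanishing:
  assumes "factor_closed W"
    and "\<And>\<nu>. \<nu> \<le> s \<Longrightarrow> ncsubst A M (ym_rel s ginv \<nu>) \<in> vanishing W"
    and "f \<in> ym_ideal s ginv"
  shows "ncsubst A M f \<in> vanishing W"
proof -
  have "ym_ideal s ginv \<subseteq> {f. ncsubst A M f \<in> vanishing W}"
    unfolding ym_ideal_def
    by (rule ncpoly.span_minimal[OF _ subspace_ncsubst_vimage_vanishing])
       (auto simp: ncsubst_ncmul
         intro!: ncmul_vanishing_right[OF assms(1) ncmul_vanishing_left[OF assms(1) assms(2)]])
  then show ?thesis using assms(3) by blast
qed

fun spaced_zeros :: "nat list \<Rightarrow> bool" where
  "spaced_zeros [] \<longleftrightarrow> True"
| "spaced_zeros (c # w) \<longleftrightarrow> (c = 0 \<longrightarrow> 0 \<notin> set (take 2 w)) \<and> spaced_zeros w"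

lemma spaced_zeros_take: "spaced_zeros w \<Longrightarrow> spaced_zeros (take k w)"
proof (induction w arbitrary: k)
  case (Cons c w)
  then show ?case
    using set_take_subset_set_take[of "k - 1" 2 w] by (cases k) (auto simp: min_def)
qed simp

lemma spaced_zeros_drop: "spaced_zeros w \<Longrightarrow> spaced_zeros (drop k w)"
  by (induction w arbitrary: k) (auto simp: drop_Cons')

definition spaced_words :: "nat \<Rightarrow> nat list set" where
  "spaced_words n = {u \<in> words {0, 1} n. spaced_zeros u}"

lemma factor_closed_spaced_zeros: "factor_closed (Collect spaced_zeros)"
  by (simp add: factor_closed_def spaced_zeros_take spaced_zeros_drop)

definition bilin ::
  "nat \<Rightarrow> (nat \<Rightarrow> nat \<Rightarrow> complex) \<Rightarrow> (nat \<Rightarrow> complex) \<Rightarrow> (nat \<Rightarrow> complex) \<Rightarrow> complex"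
  where "bilin s G x y = (\<Sum>i\<le>s. \<Sum>j\<le>s. G i j * x i * y j)"

lemma ncsubst_ym_rel_vanishing:
  fixes ginv :: "nat \<Rightarrow> nat \<Rightarrow> real"
  defines "G \<equiv> \<lambda>i j. complex_of_real (ginv i j)"
  assumes "\<nu> \<le> s"
    and isotropic: "\<And>p q. p \<noteq> 0 \<or> q \<noteq> 0 \<Longrightarrow> bilin s G (\<lambda>i. M i p) (\<lambda>i. M i q) = 0"
  shows "ncsubst {0..s} M (ym_rel s ginv \<nu>) \<in> vanishing (Collect spaced_zeros)"
  unfolding vanishing_def
proof (intro CollectI ballI)
  fix u assume "u \<in> Collect spaced_zeros"
  define S where "S p q = bilin s G (\<lambda>i. M i p) (\<lambda>i. M i q)" for p q
  have subst_rel: "ncsubst {0..s} M (ym_rel s ginv \<nu>) = (\<Sum>la\<le>s. \<Sum>\<mu>\<le>s. cscale (G la \<mu>)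
      (nccomm (nclinear (M la)) (nccomm (nclinear (M \<mu>)) (nclinear (M \<nu>)))))"
    unfolding ym_rel_def ncsubst_sum ncsubst_cscale ncsubst_nccomm G_def
    using \<open>\<nu> \<le> s\<close> by (intro sum.cong refl) (simp add: ncsubst_letter)
  show "ncsubst {0..s} M (ym_rel s ginv \<nu>) u = 0"
  proof (cases "length u = 3")
    case True
    then obtain x y z where u: "u = [x, y, z]"
      by (auto simp: numeral_3_eq_3 length_Suc_conv)
    have "ncsubst {0..s} M (ym_rel s ginv \<nu>) u = (\<Sum>la\<le>s. \<Sum>\<mu>\<le>s. G la \<mu> *
          (M la x * (M \<mu> y * M \<nu> z - M \<nu> y * M \<mu> z) - (M \<mu> x * M \<nu> y - M \<nu> x * M \<mu> y) * M la z))"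
      by (simp add: subst_rel sum_fun_apply nested_nccomm_nclinear u)
    also have "\<dots> = M \<nu> z * S x y - M \<nu> y * S x z - M \<nu> y * S z x + M \<nu> x * S z y"
      by (simp add: S_def bilin_def sum_distrib_left flip: sum_subtractf sum.distrib)
         (simp add: algebra_simps)
    also have "\<dots> = 0"
      \<comment> \<open>in a word of length 3 with spaced zeros, at most one letter is 0\<close>
      using \<open>u \<in> Collect spaced_zeros\<close> by (auto simp: u S_def isotropic)
    finally show ?thesis .
  next
    case False
    then show ?thesis
      by (simp add: subst_rel sum_fun_apply nested_nccomm_nclinear)
  qed
qed

section \<open>Dual families and dimension\<close>

text \<open>The product, over the positions \<open>k\<close> of \<open>u\<close>, of the linear polynomials
  \<open>\<Sum>i\<in>A. D i (u!k) \<cdot> i\<close>.\<close>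
definition dual_mono :: "nat set \<Rightarrow> (nat \<Rightarrow> nat \<Rightarrow> complex) \<Rightarrow> nat list \<Rightarrow> ncpoly" where
  "dual_mono A D u = (\<lambda>w. if w \<in> words A (length u) then prod_list (map2 D w u) else 0)"

lemma dual_mono_in_free_deg: "dual_mono {0..s} D u \<in> free_deg s (length u)"
  by (auto simp: dual_mono_def free_deg_def words_def split: if_splits)

lemma ncsubst_dual_mono:
  assumes dual: "\<And>c c'. c \<in> C \<Longrightarrow> c' \<in> C \<Longrightarrow> (\<Sum>i\<in>A. D i c * M i c') = (if c = c' then 1 else 0)"
    and "set u \<subseteq> C" "set u' \<subseteq> C" "length u' = length u"
  shows "ncsubst A M (dual_mono A D u) u' = (if u = u' then 1 else 0)"
proof -
  let ?H = "\<lambda>i (c, c'). D i c * M i c'"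
  have "ncsubst A M (dual_mono A D u) u' = (\<Sum>w\<in>words A (length (zip u u')). prod_list (map2 ?H w (zip u u')))"
    unfolding ncsubst_def dual_mono_def
    using assms(4) by (intro sum.cong) (auto simp: words_def prod_list_map2_mult)
  also have "\<dots> = prod_list (map (\<lambda>(c, c'). \<Sum>i\<in>A. ?H i (c, c')) (zip u u'))"
    unfolding sum_words_prod_list by (simp add: case_prod_unfold)
  also have "\<dots> = prod_list (map2 (\<lambda>c c'. if c = c' then 1 else 0) u u')"
    using assms(2,3) by (intro arg_cong[where f=prod_list] map_cong refl)
      (clarsimp, metis dual set_zip_leftD set_zip_rightD subsetD)
  also have "\<dots> = (if u = u' then 1 else 0)"
    using assms(4) by (simp add: prod_list_map2_delta)
  finally show ?thesis .
qed

lemma free_deg_subset_span: "free_deg s n \<subseteq> ncpoly.span (ncmono ` words {0..s} n)"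
proof
  fix f assume f: "f \<in> free_deg s n"
  have "f = (\<Sum>w\<in>words {0..s} n. cscale (f w) (ncmono w))"
  proof
    fix x
    have "(\<Sum>w\<in>words {0..s} n. cscale (f w) (ncmono w)) x = (\<Sum>w\<in>words {0..s} n. if x = w then f x else 0)"
      unfolding sum_fun_apply by (intro sum.cong) (auto simp: ncmono_def)
    also have "\<dots> = f x"
      using f by (subst sum.delta'[OF finite_words]) (auto simp: free_deg_def words_def)
    finally show "f x = (\<Sum>w\<in>words {0..s} n. cscale (f w) (ncmono w)) x" by simp
  qed
  also have "\<dots> \<in> ncpoly.span (ncmono ` words {0..s} n)"
    by (intro ncpoly.span_sum ncpoly.span_scale ncpoly.span_base) auto
  finally show "f \<in> ncpoly.span (ncmono ` words {0..s} n)" .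
qed

lemma block_Cons_spaced_words:
  "c \<in> {0, 1} \<Longrightarrow> w \<in> spaced_words n \<Longrightarrow> c # 1 # 1 # w \<in> spaced_words (n + 3)"
  by (auto simp: spaced_words_def words_def)

lemma finite_spaced_words: "finite (spaced_words n)"
  by (simp add: spaced_words_def)

lemma two_pow_le_card_spaced_words: "2 ^ k \<le> card (spaced_words (3 * k + r))"
proof (induction k)
  case 0
  have "replicate r 1 \<in> spaced_words r"
    by (induction r) (auto simp: spaced_words_def words_def)
  then show ?case
    using finite_spaced_words by (simp add: Suc_le_eq card_gt_0_iff) blast
next
  case (Suc k)
  have "2 ^ Suc k \<le> card ({0, 1 :: nat} \<times> spaced_words (3 * k + r))"
    using Suc.IH by (simp add: card_cartesian_product)
  also have "\<dots> = card ((\<lambda>(c, w). c # 1 # 1 # w) ` ({0, 1} \<times> spaced_words (3 * k + r)))"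
    by (rule card_image[symmetric]) (auto simp: inj_on_def)
  also have "\<dots> \<le> card (spaced_words (3 * Suc k + r))"
    using block_Cons_spaced_words[of _ _ "3 * k + r"] finite_spaced_words
    by (intro card_mono) (auto simp: add.commute add.left_commute)
  finally show ?case .
qed

lemma (in vector_space) independent_Un_dual_family:
  fixes e :: "'i \<Rightarrow> 'b" and \<phi> :: "'i \<Rightarrow> 'b \<Rightarrow> 'a"
  assumes "independent B" "finite B" "finite I"
    and add: "\<And>i x y. i \<in> I \<Longrightarrow> \<phi> i (x + y) = \<phi> i x + \<phi> i y"
    and scale: "\<And>i c x. i \<in> I \<Longrightarrow> \<phi> i (c *s x) = c * \<phi> i x"
    and vanish: "\<And>i x. i \<in> I \<Longrightarrow> x \<in> B \<Longrightarrow> \<phi> i x = 0"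
    and dual: "\<And>i j. i \<in> I \<Longrightarrow> j \<in> I \<Longrightarrow> \<phi> i (e j) = (if i = j then 1 else 0)"
  shows "independent (B \<union> e ` I)"
proof (rule independent_if_scalars_zero)
  show "finite (B \<union> e ` I)" using \<open>finite B\<close> \<open>finite I\<close> by simp
next
  fix f x assume sum0: "(\<Sum>x\<in>B \<union> e ` I. f x *s x) = 0" and x: "x \<in> B \<union> e ` I"
  have "inj_on e I"
    using dual by (intro inj_onI) (metis one_neq_zero)
  have disjoint: "B \<inter> e ` I = {}"
    using dual vanish by fastforce
  have \<phi>_sum: "\<phi> i (\<Sum>x\<in>S. g x) = (\<Sum>x\<in>S. \<phi> i (g x))" if "i \<in> I" "finite S" for i S g
    using \<open>finite S\<close> scale[OF \<open>i \<in> I\<close>, of 0 0] by induction (simp_all add: add \<open>i \<in> I\<close>)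
  have f_e: "f (e i) = 0" if "i \<in> I" for i
  proof -
    have "0 = \<phi> i (\<Sum>x\<in>B \<union> e ` I. f x *s x)"
      using scale[OF that, of 0 0] by (simp add: sum0)
    also have "\<dots> = (\<Sum>x\<in>B \<union> e ` I. f x * \<phi> i x)"
      using that \<open>finite B\<close> \<open>finite I\<close> by (simp add: \<phi>_sum scale)
    also have "\<dots> = (\<Sum>x\<in>B \<union> e ` I. if x = e i then f x else 0)"
      using that disjoint \<open>inj_on e I\<close>
      by (intro sum.cong) (auto simp: vanish dual inj_on_eq_iff)
    also have "\<dots> = f (e i)"
      using that \<open>finite B\<close> \<open>finite I\<close> by simp
    finally show ?thesis ..
  qed
  have "(\<Sum>x\<in>e ` I. f x *s x) = 0"
    using f_e by (intro sum.neutral) auto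
  then have "(\<Sum>x\<in>B. f x *s x) = 0"
    using sum0 \<open>finite B\<close> \<open>finite I\<close> disjoint by (simp add: sum.union_disjoint)
  then show "f x = 0"
    using x f_e independentD[OF \<open>independent B\<close> \<open>finite B\<close> order_refl] by blast
qed

lemma (in vector_space) card_dual_family_add_dim_le:
  fixes e :: "'i \<Rightarrow> 'b" and \<phi> :: "'i \<Rightarrow> 'b \<Rightarrow> 'a"
  assumes "F \<subseteq> span T" "finite T" "K \<subseteq> F" "finite I" "e ` I \<subseteq> F"
    and "\<And>i x y. i \<in> I \<Longrightarrow> \<phi> i (x + y) = \<phi> i x + \<phi> i y"
    and "\<And>i c x. i \<in> I \<Longrightarrow> \<phi> i (c *s x) = c * \<phi> i x"
    and vanish: "\<And>i x. i \<in> I \<Longrightarrow> x \<in> K \<Longrightarrow> \<phi> i x = 0"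
    and dual: "\<And>i j. i \<in> I \<Longrightarrow> j \<in> I \<Longrightarrow> \<phi> i (e j) = (if i = j then 1 else 0)"
  shows "card I + dim K \<le> dim F"
proof -
  obtain B where B: "B \<subseteq> K" "independent B" "K \<subseteq> span B" "card B = dim K"
    by (rule basis_exists)
  obtain BF where BF: "BF \<subseteq> F" "independent BF" "F \<subseteq> span BF" "card BF = dim F"
    by (rule basis_exists)
  have "finite BF"
    using independent_span_bound[OF \<open>finite T\<close> BF(2)] BF(1) assms(1) by blast
  have "finite B"
    using independent_span_bound[OF \<open>finite BF\<close> B(2)] B(1) BF(3) assms(3) by blast
  have "independent (B \<union> e ` I)"
    using B(1) by (intro independent_Un_dual_family[OF B(2) \<open>finite B\<close> assms(4,6,7) _ dual])
      (auto intro: vanish)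
  moreover have "B \<union> e ` I \<subseteq> span BF"
    using B(1) BF(3) assms(3,5) by blast
  ultimately have "card (B \<union> e ` I) \<le> card BF"
    using independent_span_bound[OF \<open>finite BF\<close>] by blast
  moreover have "inj_on e I"
    using dual by (intro inj_onI) (metis one_neq_zero)
  moreover have "B \<inter> e ` I = {}"
    using dual vanish B(1) by fastforce
  ultimately show ?thesis
    using B(4) BF(4) \<open>finite B\<close> \<open>finite I\<close> by (simp add: card_Un_disjoint card_image)
qed

lemma card_spaced_words_le_ym_dim:
  fixes ginv :: "nat \<Rightarrow> nat \<Rightarrow> real" and D M :: "nat \<Rightarrow> nat \<Rightarrow> complex"
  assumes "\<And>p q. p \<noteq> 0 \<or> q \<noteq> 0 \<Longrightarrow>
      bilin s (\<lambda>i j. complex_of_real (ginv i j)) (\<lambda>i. M i p) (\<lambda>i. M i q) = 0"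
    and "\<And>c c'. c \<in> {0, 1} \<Longrightarrow> c' \<in> {0, 1} \<Longrightarrow>
      (\<Sum>i\<in>{0..s}. D i c * M i c') = (if c = c' then 1 else 0)"
  shows "card (spaced_words n) \<le> ym_dim s ginv n"
proof -
  let ?I = "spaced_words n"
  let ?K = "ym_ideal s ginv \<inter> free_deg s n"
  have "card ?I + ncpoly.dim ?K \<le> ncpoly.dim (free_deg s n)"
  proof (rule ncpoly.card_dual_family_add_dim_le
      [where T="ncmono ` words {0..s} n" and e="dual_mono {0..s} D"
         and \<phi>="\<lambda>u f. ncsubst {0..s} M f u"])
    show "dual_mono {0..s} D ` ?I \<subseteq> free_deg s n"
      using dual_mono_in_free_deg by (auto simp: spaced_words_def words_def)
    show "ncsubst {0..s} M f u = 0" if "u \<in> ?I" "f \<in> ?K" for u f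
      using ncsubst_ym_ideal_vanishing[OF factor_closed_spaced_zeros
          ncsubst_ym_rel_vanishing[OF _ assms(1)]] that
      by (auto simp: vanishing_def spaced_words_def)
    show "ncsubst {0..s} M (dual_mono {0..s} D v) u = (if u = v then 1 else 0)"
      if "u \<in> ?I" "v \<in> ?I" for u v
      using that ncsubst_dual_mono[where C="{0, 1}" and u=v and u'=u, OF assms(2)]
      by (auto simp: spaced_words_def words_def)
  qed (auto simp: free_deg_subset_span ncsubst_add ncsubst_cscale finite_spaced_words)
  then show ?thesis
    unfolding ym_dim_def by simp
qed

section \<open>Isotropic vectors of a complex symmetric form\<close>

lemma right_inverse_symmetric:
  fixes g h :: "nat \<Rightarrow> nat \<Rightarrow> 'a :: comm_semiring_1"
  assumes sym: "\<And>i j. i \<le> s \<Longrightarrow> j \<le> s \<Longrightarrow> g i j = g j i"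
    and inv: "\<And>i j. i \<le> s \<Longrightarrow> j \<le> s \<Longrightarrow> (\<Sum>k\<le>s. g i k * h k j) = (if i = j then 1 else 0)"
    and "i \<le> s" "j \<le> s"
  shows "h i j = h j i"
proof -
  define X where "X = (\<Sum>k\<le>s. \<Sum>l\<le>s. h k i * g k l * h l j)"
  have "X = (\<Sum>k\<le>s. h k i * (\<Sum>l\<le>s. g k l * h l j))"
    by (simp add: X_def sum_distrib_left mult.assoc)
  also have "\<dots> = (\<Sum>k\<le>s. if k = j then h k i else 0)"
    by (intro sum.cong refl) (simp add: inv \<open>j \<le> s\<close>)
  finally have "X = h j i" using \<open>j \<le> s\<close> by simp
  have "X = (\<Sum>l\<le>s. (\<Sum>k\<le>s. h k i * g k l) * h l j)"
    unfolding X_def by (subst sum.swap) (simp add: sum_distrib_right)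
  also have "\<dots> = (\<Sum>l\<le>s. if l = i then h l j else 0)"
  proof (intro sum.cong refl)
    fix l assume "l \<in> {..s}"
    then have "(\<Sum>k\<le>s. h k i * g k l) = (\<Sum>k\<le>s. g l k * h k i)"
      by (intro sum.cong refl) (simp add: sym mult.commute)
    then show "(\<Sum>k\<le>s. h k i * g k l) * h l j = (if l = i then h l j else 0)"
      using \<open>l \<in> {..s}\<close> by (simp add: inv \<open>i \<le> s\<close>)
  qed
  finally show ?thesis using \<open>X = h j i\<close> \<open>i \<le> s\<close> by simp
qed

lemma complex_quadratic_root: "(a :: complex) \<noteq> 0 \<Longrightarrow> \<exists>t. a * t\<^sup>2 + 2 * b * t + c = 0"
proof
  assume "a \<noteq> 0"
  define r where "r = csqrt (b\<^sup>2 - a * c)"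
  have "a * (a * ((r - b) / a)\<^sup>2 + 2 * b * ((r - b) / a) + c) = r\<^sup>2 - (b\<^sup>2 - a * c)"
    using \<open>a \<noteq> 0\<close> by (simp add: field_simps power2_eq_square)
  then show "a * ((r - b) / a)\<^sup>2 + 2 * b * ((r - b) / a) + c = 0"
    using \<open>a \<noteq> 0\<close> by (simp add: r_def)
qed

definition dotp :: "nat \<Rightarrow> (nat \<Rightarrow> complex) \<Rightarrow> (nat \<Rightarrow> complex) \<Rightarrow> complex" where
  "dotp s x y = (\<Sum>i\<le>s. x i * y i)"

definition vec3 :: "'a \<Rightarrow> 'a \<Rightarrow> 'a \<Rightarrow> nat \<Rightarrow> 'a :: zero" where
  "vec3 x y z = (\<lambda>i. if i = 0 then x else if i = 1 then y else if i = 2 then z else 0)"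

lemma sum_vec3_mult:
  assumes "2 \<le> s"
  shows "(\<Sum>i\<le>s. vec3 x y z i * f i) = x * f 0 + y * f 1 + (z :: 'a :: comm_semiring_1) * f 2"
proof -
  have "(\<Sum>i\<le>s. vec3 x y z i * f i) = (\<Sum>i\<in>{0, 1, 2}. vec3 x y z i * f i)"
    using assms by (intro sum.mono_neutral_right) (auto simp: vec3_def)
  then show ?thesis by (simp add: vec3_def add_ac)
qed

lemma dotp_vec3: "2 \<le> s \<Longrightarrow> dotp s (vec3 x y z) (vec3 x' y' z') = x * x' + y * y' + z * z'"
  by (simp add: dotp_def sum_vec3_mult) (simp add: vec3_def)

lemma bilin_vec3:
  assumes "2 \<le> s"
  shows "bilin s G (vec3 x y z) (vec3 x' y' z') =
    x * (x' * G 0 0 + y' * G 0 1 + z' * G 0 2) + y * (x' * G 1 0 + y' * G 1 1 + z' * G 1 2)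
    + z * (x' * G 2 0 + y' * G 2 1 + z' * G 2 2)"
proof -
  have "bilin s G (vec3 x y z) (vec3 x' y' z') = (\<Sum>i\<le>s. vec3 x y z i * (\<Sum>j\<le>s. vec3 x' y' z' j * G i j))"
    by (simp add: bilin_def sum_distrib_left mult_ac)
  then show ?thesis
    using assms by (simp add: sum_vec3_mult)
qed

lemma isotropic_pair_exists:
  fixes G :: "nat \<Rightarrow> nat \<Rightarrow> complex"
  assumes s: "2 \<le> s" and sym: "\<And>i j. i \<le> s \<Longrightarrow> j \<le> s \<Longrightarrow> G i j = G j i"
  obtains a b \<alpha> \<beta> where "bilin s G a b = 0" "bilin s G b a = 0" "bilin s G b b = 0"
    "dotp s \<alpha> a = 1" "dotp s \<alpha> b = 0" "dotp s \<beta> a = 0" "dotp s \<beta> b = 1"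
proof -
  have G_sym: "G 1 0 = G 0 1" "G 2 0 = G 0 2" "G 2 1 = G 1 2" "G (Suc 0) 0 = G 0 (Suc 0)"
    "G 2 (Suc 0) = G (Suc 0) 2"
    using sym s by auto
  note simps = bilin_vec3[OF s] dotp_vec3[OF s] G_sym
  \<comment> \<open>\<open>b\<close> is isotropic in the span of \<open>e\<^sub>0, e\<^sub>1\<close>; \<open>a\<close> lies in the \<open>G\<close>-orthogonal of \<open>b\<close>
    and is independent of it, as certified by \<open>\<alpha>, \<beta>\<close>.\<close>
  show ?thesis
  proof (cases "G 0 0 = 0")
    case G00: True
    show ?thesis
    proof (cases "G 0 1 = 0")
      case True
      show ?thesis
        by (rule that[of "vec3 0 1 0" "vec3 1 0 0" "vec3 0 1 0" "vec3 1 0 0"];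
            use G00 True in \<open>simp add: simps\<close>)
    next
      case False
      show ?thesis
        by (rule that[of "vec3 0 (- G 0 2) (G 0 1)" "vec3 1 0 0" "vec3 0 0 (1 / G 0 1)" "vec3 1 0 0"];
            use G00 False in \<open>simp add: simps algebra_simps\<close>)
    qed
  next
    case False
    then obtain t where t: "G 0 0 * t\<^sup>2 + 2 * G 0 1 * t + G 1 1 = 0"
      using complex_quadratic_root by blast
    have "bilin s G (vec3 t 1 0) (vec3 t 1 0) = G 0 0 * t\<^sup>2 + 2 * G 0 1 * t + G 1 1"
      by (simp add: simps algebra_simps power2_eq_square)
    then have isotropic: "bilin s G (vec3 t 1 0) (vec3 t 1 0) = 0"
      using t by simp
    define c0 where "c0 = G 0 0 * t + G 0 1"
    define c2 where "c2 = G 0 2 * t + G 1 2"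
    show ?thesis
    proof (cases "c0 = 0")
      case False
      show ?thesis
        by (rule that[of "vec3 (- c2) 0 c0" "vec3 t 1 0" "vec3 0 0 (1 / c0)" "vec3 0 1 0"];
            (fact isotropic)?; use False in \<open>simp add: simps c0_def c2_def algebra_simps\<close>)
    next
      case True
      show ?thesis
        by (rule that[of "vec3 1 0 0" "vec3 t 1 0" "vec3 1 (- t) 0" "vec3 0 1 0"];
            (fact isotropic)?; use True in \<open>simp add: simps c0_def algebra_simps\<close>)
    qed
  qed
qed

text \<open>\<open>ncsubst {0..s} (pair_coeffs a b)\<close> substitutes \<open>a\<^sub>i X + b\<^sub>i Y\<close> for \<open>\<nabla>\<^sub>i\<close>,
  with \<open>X\<close>, \<open>Y\<close> the letters \<open>0\<close>, \<open>1\<close>.\<close>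
definition pair_coeffs :: "(nat \<Rightarrow> complex) \<Rightarrow> (nat \<Rightarrow> complex) \<Rightarrow> nat \<Rightarrow> nat \<Rightarrow> complex" where
  "pair_coeffs a b i c = (if c = 0 then a i else if c = 1 then b i else 0)"

lemma bilin_pair_coeffs:
  assumes "bilin s G a b = 0" "bilin s G b a = 0" "bilin s G b b = 0" "p \<noteq> 0 \<or> q \<noteq> 0"
  shows "bilin s G (\<lambda>i. pair_coeffs a b i p) (\<lambda>i. pair_coeffs a b i q) = 0"
proof (cases "p \<in> {0, 1} \<and> q \<in> {0, 1}")
  case True
  then show ?thesis
    using assms by (auto simp: pair_coeffs_def)
next
  case False
  then show ?thesis
    by (auto simp: pair_coeffs_def bilin_def)
qed

lemma sum_pair_coeffs_mult:
  assumes "dotp s \<alpha> a = 1" "dotp s \<alpha> b = 0" "dotp s \<beta> a = 0" "dotp s \<beta> b = 1"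
    and "c \<in> {0, 1}" "c' \<in> {0, 1}"
  shows "(\<Sum>i\<in>{0..s}. pair_coeffs \<alpha> \<beta> i c * pair_coeffs a b i c') = (if c = c' then 1 else 0)"
  using assms by (auto simp: pair_coeffs_def dotp_def atLeast0AtMost)

lemma exponential_le_two_pow_div3: "1/2 * (2 powr (1/3)) ^ n \<le> real (2 ^ (n div 3))"
proof -
  have "(2 powr (1/3)) ^ n = (2 :: real) powr (real n / 3)"
    by (simp add: powr_power)
  also have "\<dots> \<le> 2 powr (real (n div 3 + 1))"
    by (intro powr_mono) linarith+
  also have "\<dots> = 2 * 2 ^ (n div 3)"
    by (simp add: powr_add powr_realpow)
  finally show ?thesis by simp
qed

theorem mainTheorem5:
  fixes s :: nat and g ginv :: "nat \<Rightarrow> nat \<Rightarrow> real"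
  assumes "s \<ge> 2"
    and "\<And>\<mu> \<nu>. \<mu> \<le> s \<Longrightarrow> \<nu> \<le> s \<Longrightarrow> g \<mu> \<nu> = g \<nu> \<mu>"
    and "\<And>la \<nu>. la \<le> s \<Longrightarrow> \<nu> \<le> s \<Longrightarrow>
           (\<Sum>\<mu>\<le>s. g la \<mu> * ginv \<mu> \<nu>) = (if la = \<nu> then 1 else 0)"
    and "\<And>la \<nu>. la \<le> s \<Longrightarrow> \<nu> \<le> s \<Longrightarrow>
           (\<Sum>\<mu>\<le>s. ginv la \<mu> * g \<mu> \<nu>) = (if la = \<nu> then 1 else 0)"
  shows "\<exists>c > 1. \<exists>C > 0. \<forall>n. real (ym_dim s ginv n) \<ge> C * c ^ n"
proof -
  define G where "G i j = complex_of_real (ginv i j)" for i j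
  have "G i j = G j i" if "i \<le> s" "j \<le> s" for i j
    using right_inverse_symmetric[OF assms(2,3) that] by (simp add: G_def)
  then obtain a b \<alpha> \<beta> where ab: "bilin s G a b = 0" "bilin s G b a = 0" "bilin s G b b = 0"
    and dual: "dotp s \<alpha> a = 1" "dotp s \<alpha> b = 0" "dotp s \<beta> a = 0" "dotp s \<beta> b = 1"
    using isotropic_pair_exists[OF assms(1)] by blast
  have "2 ^ (n div 3) \<le> ym_dim s ginv n" for n
    using two_pow_le_card_spaced_words[of "n div 3" "n mod 3"]
      card_spaced_words_le_ym_dim[where M="pair_coeffs a b" and D="pair_coeffs \<alpha> \<beta>",
        OF bilin_pair_coeffs[OF ab, unfolded G_def] sum_pair_coeffs_mult[OF dual]]
    by (simp add: order.trans)
  then have "1/2 * (2 powr (1/3)) ^ n \<le> real (ym_dim s ginv n)" for n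
    by (meson exponential_le_two_pow_div3 of_nat_le_iff order_trans)
  then show ?thesis
    by (intro exI[of _ "2 powr (1/3)"] conjI exI[of _ "1/2"] allI) auto
qed

end
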